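(* Let $K$ be a twisted knot diagram with an even number of bars. Then $K$ admits a coloring by the twisted biquandle $(\mathbb{Z},\ a\ast b=a\circ b=a+1,\ f(a)=-a)$ if and only if $S(K)=0$.
   Context: A twisted knot diagram is a virtual knot diagram with finitely many bars on its edges. Segments are the pieces between real crossings and bars. A coloring by $(\mathbb{Z}, a\ast b=a\circ b=a+1, f(a)=-a)$ labels segments by integers so that at each real crossing, with $x$ the label of the under-strand segment to the right of the over-strand and $y$ the label of the over-strand segment to the right of the under-strand (right with respect to strand orientations), the other under-segment is labeled $x+1$ and the other over-segment $y+1$, and labels on the two sides of a bar are negatives of each other. If $K$ has $2n\geq 2$ bars, they cut $K$ into edges $e_1,\dots,e_{2n}$ numbered consecutively along the orientation; for an edge $e$, $o_\pm(e)$ (resp. $u_\pm(e)$) is the number of positive/negative crossings at which $e$ is the over-strand (resp. under-strand), $s(e)=u_+(e)+o_-(e)-u_-(e)-o_+(e)$, and $S(K)=\left|\sum_{i=1}^n s(e_{2i-1})-\sum_{i=1}^n s(e_{2i})\right|$; $S(K)=0$ if there are no bars. A crossing is positive if, with both strands pointing upward, the over-strand runs from bottom-left to top-right. *)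

theory Defs
  imports Main
begin

text \<open>Combinatorial model of a (one-component) twisted knot diagram:
  a signed Gauss code with bars.  The diagram is the cyclic list of events met
  when travelling once around the knot along its orientation.  Virtual crossings
  do not affect segments, colorings or S(K), so they are not recorded.
  Crossing c is positive iff sg c.\<close>

datatype event = Bar | Over nat | Under nat

definition wf_diagram :: "event list \<Rightarrow> bool" where
  "wf_diagram G \<longleftrightarrow>
     (\<forall>c. (Over c \<in> set G \<or> Under c \<in> set G) \<longrightarrow>
        length (filter (\<lambda>e. e = Over c) G) = 1 \<and> length (filter (\<lambda>e. e = Under c) G) = 1)"

text \<open>Segments: with m events (positions 0..m-1), segment j is the piece of
  the knot leaving event j and ending at event (j+1) mod m.  Hence at event j
  the incoming segment is (j + m - 1) mod m and the outgoing one is j.\<close>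

definition in_seg :: "nat \<Rightarrow> nat \<Rightarrow> nat" where
  "in_seg m j = (j + m - 1) mod m"

text \<open>Derived from the rule in the paper:
  at a positive crossing the under-label increases by 1 and the over-label
  decreases by 1 along the orientation; at a negative crossing the under-label
  decreases by 1 and the over-label increases by 1; at a bar the label is negated.\<close>

fun event_ok :: "(nat \<Rightarrow> bool) \<Rightarrow> event \<Rightarrow> int \<Rightarrow> int \<Rightarrow> bool" where
  "event_ok sg Bar a b \<longleftrightarrow> b = - a"
| "event_ok sg (Under c) a b \<longleftrightarrow> (if sg c then b = a + 1 else b = a - 1)"
| "event_ok sg (Over c) a b \<longleftrightarrow> (if sg c then b = a - 1 else b = a + 1)"

definition is_coloring :: "event list \<Rightarrow> (nat \<Rightarrow> bool) \<Rightarrow> (nat \<Rightarrow> int) \<Rightarrow> bool" where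
  "is_coloring G sg col \<longleftrightarrow>
     (\<forall>j < length G. event_ok sg (G ! j) (col (in_seg (length G) j)) (col j))"

definition colorable :: "event list \<Rightarrow> (nat \<Rightarrow> bool) \<Rightarrow> bool" where
  "colorable G sg \<longleftrightarrow> (\<exists>col. is_coloring G sg col)"

text \<open>Contribution of an event to s(e) = u+ + o- - u- - o+.\<close>

fun s_contrib :: "(nat \<Rightarrow> bool) \<Rightarrow> event \<Rightarrow> int" where
  "s_contrib sg Bar = 0"
| "s_contrib sg (Under c) = (if sg c then 1 else -1)"
| "s_contrib sg (Over c) = (if sg c then -1 else 1)"

definition bar_positions :: "event list \<Rightarrow> nat list" where
  "bar_positions G = filter (\<lambda>i. G ! i = Bar) [0..<length G]"

text \<open>Positions of the events on edge i (0-based) : strictly between bar i and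
  bar i+1 (cyclically, the last edge runs from the last bar around to the first).\<close>

definition edge_positions :: "event list \<Rightarrow> nat \<Rightarrow> nat set" where
  "edge_positions G i =
     (let B = bar_positions G; k = length B in
      if Suc i < k then {p. B ! i < p \<and> p < B ! Suc i}
      else {p. p < length G \<and> (B ! (k - 1) < p \<or> p < B ! 0)})"

definition s_edge :: "event list \<Rightarrow> (nat \<Rightarrow> bool) \<Rightarrow> nat \<Rightarrow> int" where
  "s_edge G sg i = (\<Sum>p\<in>edge_positions G i. s_contrib sg (G ! p))"

text \<open>S(K): edges e_1..e_{2n} correspond to i = 0..2n-1; odd-numbered edges
  e_{2i-1} are those with even 0-based index.\<close>

definition S_inv :: "event list \<Rightarrow> (nat \<Rightarrow> bool) \<Rightarrow> int" where
  "S_inv G sg =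
     (let k = length (bar_positions G) in
      if k = 0 then 0
      else \<bar>(\<Sum>i<k. if even i then s_edge G sg i else 0)
            - (\<Sum>i<k. if odd i then s_edge G sg i else 0)\<bar>)"

end

theory Submission
  imports Defs
begin

text \<open>Multiply the label of the segment leaving event p by the sign
  \<open>\<epsilon>\<^sub>p = (-1)^b\<close>, b the number of bars up to and including p.  As the number of bars
  is even, the sign is consistent around the knot; it turns the bar rule \<open>b = -a\<close> into the
  identity and every crossing rule into \<open>g\<^sub>p = g\<^sub>p\<^sub>-\<^sub>1 + \<epsilon>\<^sub>p s\<^sub>p\<close>.  Such a cyclic
  difference equation has an integer solution iff \<open>\<Sigma>\<^sub>p \<epsilon>\<^sub>p s\<^sub>p = 0\<close>.  On the i-th edge
  \<open>\<epsilon> = -(-1)^i\<close>, so this sum is minus the alternating sum of the \<open>s(e\<^sub>i)\<close>, whose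
  absolute value is S(K).  Without bars the sum is \<open>\<Sigma>\<^sub>p s\<^sub>p\<close>, which vanishes because
  the over- and the under-passage of a crossing contribute opposite amounts.\<close>

lemma sorted_nth_less_iff_less_length_filter:
  fixes B :: "nat list"
  assumes "sorted_wrt (<) B" "j < length B"
  shows "B ! j < p \<longleftrightarrow> j < length (filter (\<lambda>q. q < p) B)"
  using assms
proof (induction B arbitrary: j)
  case (Cons a B)
  show ?case
  proof (cases "a < p")
    case True
    then show ?thesis using Cons by (cases j) auto
  next
    case False
    have "filter (\<lambda>q. q < p) B = []"
      using Cons.prems(1) False by (auto simp: filter_empty_conv)
    moreover have "a \<le> (a # B) ! j"
    proof (cases j)
      case (Suc i)
      then have "B ! i \<in> set B" using Cons.prems(2) by simp
      then show ?thesis using Cons.prems(1) Suc by auto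
    qed simp
    ultimately show ?thesis using False by auto
  qed
qed simp

subsection \<open>Cyclic difference equations\<close>

lemma in_seg_0: "0 < m \<Longrightarrow> in_seg m 0 = m - 1"
  by (simp add: in_seg_def)

lemma in_seg_Suc: "Suc p < m \<Longrightarrow> in_seg m (Suc p) = p"
  by (simp add: in_seg_def)

lemma cyclic_difference_solvable_iff:
  fixes w :: "nat \<Rightarrow> int"
  shows "(\<exists>g. \<forall>p<m. g p = g (in_seg m p) + w p) \<longleftrightarrow> (\<Sum>p<m. w p) = 0"
proof (cases "m = 0")
  case False
  then have m: "0 < m" by simp
  show ?thesis
  proof
    assume "\<exists>g. \<forall>p<m. g p = g (in_seg m p) + w p"
    then obtain g where g: "\<And>p. p < m \<Longrightarrow> g p = g (in_seg m p) + w p" by blast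
    have telescope: "g p = g 0 + (\<Sum>q<p. w (Suc q))" if "p < m" for p
      using that
    proof (induction p)
      case (Suc p)
      have "g (Suc p) = g p + w (Suc p)"
        using g[OF Suc.prems] by (simp add: in_seg_Suc[OF Suc.prems])
      then show ?case using Suc by simp
    qed simp
    have "g 0 = g 0 + (\<Sum>q<m - 1. w (Suc q)) + w 0"
      using g[OF m] telescope[of "m - 1"] m by (simp add: in_seg_0[OF m])
    moreover have "(\<Sum>p<m. w p) = w 0 + (\<Sum>q<m - 1. w (Suc q))"
      using m sum.lessThan_Suc_shift[of w "m - 1"] by simp
    ultimately show "(\<Sum>p<m. w p) = 0" by simp
  next
    assume total: "(\<Sum>p<m. w p) = 0"
    have "\<forall>p<m. (\<Sum>q<Suc p. w q) = (\<Sum>q<Suc (in_seg m p). w q) + w p"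
    proof (intro allI impI)
      fix p assume p: "p < m"
      show "(\<Sum>q<Suc p. w q) = (\<Sum>q<Suc (in_seg m p). w q) + w p"
      proof (cases p)
        case 0
        then show ?thesis using total m in_seg_0[OF m] by simp
      next
        case (Suc q)
        then show ?thesis using p in_seg_Suc[of q m] by simp
      qed
    qed
    then show "\<exists>g. \<forall>p<m. g p = g (in_seg m p) + w p"
      by (rule exI[where x = "\<lambda>p. \<Sum>q<Suc p. w q"])
  qed
qed simp

subsection \<open>Crossings are balanced\<close>

fun flip_event :: "event \<Rightarrow> event" where
  "flip_event Bar = Bar"
| "flip_event (Over c) = Under c"
| "flip_event (Under c) = Over c"

lemma flip_event_flip_event [simp]: "flip_event (flip_event e) = e"
  by (cases e) auto

lemma s_contrib_flip_event [simp]: "s_contrib sg (flip_event e) = - s_contrib sg e"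
  by (cases e) auto

lemma count_list_flip_event:
  assumes "wf_diagram G"
  shows "count_list G (flip_event e) = count_list G e"
proof -
  have count: "count_list G x = length (filter (\<lambda>e. e = x) G)" for x
    unfolding count_list_eq_length_filter by (rule arg_cong[where f = length], rule filter_cong) auto
  have "count_list G (Under c) = count_list G (Over c)" for c
  proof (cases "Over c \<in> set G \<or> Under c \<in> set G")
    case True
    then show ?thesis using assms unfolding wf_diagram_def count by auto
  qed (simp add: count_list_0_iff)
  then show ?thesis by (cases e) auto
qed

lemma sum_list_map_eq_sum_of_nat_count:
  fixes f :: "'a \<Rightarrow> 'b::comm_semiring_1"
  assumes "set xs \<subseteq> X" "finite X"
  shows "sum_list (map f xs) = (\<Sum>x\<in>X. of_nat (count_list xs x) * f x)"
  using assms(1)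
proof (induction xs)
  case (Cons a xs)
  have "(\<Sum>x\<in>X. of_nat (count_list (a # xs) x) * f x)
      = (\<Sum>x\<in>X. if a = x then f x else 0) + (\<Sum>x\<in>X. of_nat (count_list xs x) * f x)"
    by (auto simp: sum.distrib[symmetric] distrib_right intro!: sum.cong)
  also have "(\<Sum>x\<in>X. if a = x then f x else 0) = f a"
    using Cons.prems assms(2) by simp
  finally show ?case using Cons by simp
qed simp

lemma wf_diagram_sum_s_contrib:
  assumes "wf_diagram G"
  shows "sum_list (map (s_contrib sg) G) = 0"
proof -
  define X where "X = set G \<union> flip_event ` set G"
  define h where "h x = int (count_list G x) * s_contrib sg x" for x
  have "sum h X = sum h (flip_event ` X)"
    unfolding X_def by (simp add: image_Un image_image Un_commute)
  also have "\<dots> = (\<Sum>x\<in>X. h (flip_event x))"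
    by (rule sum.reindex_cong[OF inj_on_inverseI[where g = flip_event]]) simp_all
  also have "\<dots> = - sum h X"
    by (simp add: h_def count_list_flip_event[OF assms] sum_negf)
  finally have "sum h X = 0" by simp
  moreover have "sum_list (map (s_contrib sg) G) = sum h X"
    unfolding h_def by (rule sum_list_map_eq_sum_of_nat_count) (auto simp: X_def)
  ultimately show ?thesis by simp
qed

definition bars_before :: "event list \<Rightarrow> nat \<Rightarrow> nat" where
  "bars_before G p = length (filter (\<lambda>q. q < p) (bar_positions G))"

definition bar_sign :: "event list \<Rightarrow> nat \<Rightarrow> int" where
  "bar_sign G p = (-1) ^ bars_before G (Suc p)"

lemma set_bar_positions: "set (bar_positions G) = {p. p < length G \<and> G ! p = Bar}"
  by (auto simp: bar_positions_def)

lemma sorted_bar_positions: "sorted_wrt (<) (bar_positions G)"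
  by (simp add: bar_positions_def sorted_wrt_filter)

lemma length_bar_positions: "length (bar_positions G) = length (filter (\<lambda>e. e = Bar) G)"
  unfolding bar_positions_def length_filter_conv_card
  by (rule arg_cong[where f = card]) auto

lemma bars_before_Suc:
  "bars_before G (Suc p) = bars_before G p + (if p < length G \<and> G ! p = Bar then 1 else 0)"
proof -
  have card: "bars_before G q = card ({x. x < q} \<inter> set (bar_positions G))" for q
    unfolding bars_before_def by (rule distinct_length_filter) (simp add: bar_positions_def)
  have "{x. x < Suc p} \<inter> set (bar_positions G)
      = (if p \<in> set (bar_positions G) then insert p else id) ({x. x < p} \<inter> set (bar_positions G))"
    by (auto simp: less_Suc_eq)
  then show ?thesis unfolding card by (simp add: set_bar_positions)
qed

lemma bars_before_0 [simp]: "bars_before G 0 = 0"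
  by (simp add: bars_before_def)

lemma bars_before_le: "bars_before G p \<le> length (bar_positions G)"
  by (simp add: bars_before_def)

lemma bars_before_length: "bars_before G (length G) = length (bar_positions G)"
  unfolding bars_before_def by (subst filter_True) (auto simp: set_bar_positions)

lemma bar_sign_cases: "bar_sign G p = 1 \<or> bar_sign G p = -1"
  by (simp add: bar_sign_def minus_one_power_iff)

lemma bar_sign_in_seg:
  assumes "even (length (bar_positions G))" "p < length G"
  shows "bar_sign G p = (if G ! p = Bar then - 1 else 1) * bar_sign G (in_seg (length G) p)"
proof (cases p)
  case 0
  have "Suc (length G - 1) = length G"
    using assms(2) by simp
  then have "bar_sign G (length G - 1) = (-1) ^ bars_before G (length G)"
    unfolding bar_sign_def by (simp only:)
  also have "\<dots> = 1"
    using assms(1) by (simp add: bars_before_length)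
  finally have last: "bar_sign G (length G - 1) = 1" .
  have first: "bar_sign G 0 = (if G ! 0 = Bar then -1 else 1)"
    using 0 assms(2) by (simp add: bar_sign_def bars_before_Suc)
  show ?thesis
    using 0 assms(2) first last by (simp add: in_seg_0)
next
  case (Suc q)
  then show ?thesis using assms(2) in_seg_Suc by (simp add: bar_sign_def bars_before_Suc)
qed

subsection \<open>Colorings as solutions of a cyclic difference equation\<close>

lemma event_ok_iff_signed:
  fixes \<epsilon> :: int
  assumes "\<epsilon> = 1 \<or> \<epsilon> = -1"
  shows "event_ok sg ev a b \<longleftrightarrow>
    (if ev = Bar then -1 else 1) * \<epsilon> * b = \<epsilon> * a + (if ev = Bar then -1 else 1) * \<epsilon> * s_contrib sg ev"
  using assms by (cases ev) auto

lemma colorable_iff_cyclic_difference_solvable: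
  assumes "even (length (bar_positions G))"
  shows "colorable G sg \<longleftrightarrow>
    (\<exists>g. \<forall>p<length G. g p = g (in_seg (length G) p) + bar_sign G p * s_contrib sg (G ! p))"
    (is "_ \<longleftrightarrow> (\<exists>g. ?solves g)")
proof -
  have coloring_iff: "is_coloring G sg col \<longleftrightarrow> ?solves (\<lambda>p. bar_sign G p * col p)" for col
    unfolding is_coloring_def
    using event_ok_iff_signed[OF bar_sign_cases] bar_sign_in_seg[OF assms] by auto
  have sign_square: "bar_sign G p * (bar_sign G p * x) = x" for p x
    using bar_sign_cases[of G p] by auto
  show ?thesis
    unfolding colorable_def
  proof
    assume "\<exists>col. is_coloring G sg col"
    then obtain col where "is_coloring G sg col" ..
    then show "\<exists>g. ?solves g"
      unfolding coloring_iff by (rule exI[where x = "\<lambda>p. bar_sign G p * col p"])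
  next
    assume "\<exists>g. ?solves g"
    then obtain g where "?solves g" ..
    then have "is_coloring G sg (\<lambda>p. bar_sign G p * g p)"
      unfolding coloring_iff sign_square .
    then show "\<exists>col. is_coloring G sg col" by blast
  qed
qed

subsection \<open>Edges and the invariant S\<close>

text \<open>Positions before the first bar lie on the last edge, which wraps around.\<close>

definition edge_index :: "event list \<Rightarrow> nat \<Rightarrow> nat" where
  "edge_index G p =
     (if bars_before G p = 0 then length (bar_positions G) - 1 else bars_before G p - 1)"

lemma mem_edge_positions_iff:
  assumes "p < length G" "G ! p \<noteq> Bar" "i < length (bar_positions G)"
  shows "p \<in> edge_positions G i \<longleftrightarrow> i = edge_index G p"
proof -
  let ?B = "bar_positions G" and ?k = "length (bar_positions G)"
  have below: "j < ?k \<Longrightarrow> ?B ! j < p \<longleftrightarrow> j < bars_before G p" for j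
    unfolding bars_before_def by (rule sorted_nth_less_iff_less_length_filter[OF sorted_bar_positions])
  have not_bar: "j < ?k \<Longrightarrow> ?B ! j \<noteq> p" for j
    using nth_mem[of j ?B] assms(2) by (auto simp: set_bar_positions)
  show ?thesis
  proof (cases "Suc i < ?k")
    case True
    then have "p \<in> edge_positions G i \<longleftrightarrow> i < bars_before G p \<and> \<not> Suc i < bars_before G p"
      using below[OF assms(3)] below[OF True] not_bar[OF True]
      by (auto simp: edge_positions_def Let_def)
    then show ?thesis
      using True bars_before_le[of G p] by (auto simp: edge_index_def)
  next
    case False
    have last: "?k - 1 < ?k" and first: "0 < ?k"
      using assms(3) by auto
    have "p \<in> edge_positions G i \<longleftrightarrow> ?k - 1 < bars_before G p \<or> \<not> 0 < bars_before G p"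
      using False assms(1) below[OF last] below[OF first] not_bar[OF first]
      by (auto simp: edge_positions_def Let_def)
    then show ?thesis
      using False assms(3) bars_before_le[of G p] by (auto simp: edge_index_def)
  qed
qed

lemma edge_sign_eq_minus_bar_sign:
  assumes "even (length (bar_positions G))" "bar_positions G \<noteq> []" "G ! p \<noteq> Bar"
  shows "(-1) ^ edge_index G p = - bar_sign G p"
proof -
  have "odd (length (bar_positions G) - 1)"
    using assms(1,2) by simp
  then show ?thesis
    using assms(3) by (cases "bars_before G p")
      (simp_all add: edge_index_def bar_sign_def bars_before_Suc)
qed

lemma s_edge_eq_sum_indicator:
  assumes "i < length (bar_positions G)"
  shows "s_edge G sg i = (\<Sum>p<length G. if p \<in> edge_positions G i then s_contrib sg (G ! p) else 0)"
proof -
  have "bar_positions G ! j < length G" if "j < length (bar_positions G)" for j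
    using nth_mem[OF that] by (simp add: set_bar_positions)
  then have "edge_positions G i \<subseteq> {..<length G}"
    using assms by (auto simp: edge_positions_def Let_def intro: order.strict_trans)
  then show ?thesis
    unfolding s_edge_def by (simp add: sum.inter_restrict[symmetric] Int_absorb1)
qed

lemma alternating_sum_s_edge:
  assumes "even (length (bar_positions G))" "bar_positions G \<noteq> []"
  shows "(\<Sum>i<length (bar_positions G). (-1) ^ i * s_edge G sg i)
       = - (\<Sum>p<length G. bar_sign G p * s_contrib sg (G ! p))"
proof -
  let ?k = "length (bar_positions G)"
  have edge_sum: "(\<Sum>i<?k. (-1) ^ i * (if p \<in> edge_positions G i then s_contrib sg (G ! p) else 0))
      = - bar_sign G p * s_contrib sg (G ! p)" if "p < length G" for p
  proof (cases "G ! p = Bar")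
    case False
    have "edge_index G p < ?k"
      using assms(2) bars_before_le[of G p] by (auto simp: edge_index_def)
    then show ?thesis
      using mem_edge_positions_iff[OF that False] edge_sign_eq_minus_bar_sign[OF assms False]
      by (simp add: if_distrib cong: if_cong)
  next
    case True
    then show ?thesis by (simp cong: if_cong)
  qed
  have "(\<Sum>i<?k. (-1) ^ i * s_edge G sg i)
      = (\<Sum>i<?k. \<Sum>p<length G. (-1) ^ i * (if p \<in> edge_positions G i then s_contrib sg (G ! p) else 0))"
    by (simp add: s_edge_eq_sum_indicator sum_distrib_left)
  also have "\<dots> = (\<Sum>p<length G. \<Sum>i<?k. (-1) ^ i * (if p \<in> edge_positions G i then s_contrib sg (G ! p) else 0))"
    by (rule sum.swap)
  also have "\<dots> = - (\<Sum>p<length G. bar_sign G p * s_contrib sg (G ! p))"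
    by (simp add: edge_sum sum_negf)
  finally show ?thesis .
qed

lemma S_inv_eq_abs_alternating_sum:
  assumes "bar_positions G \<noteq> []"
  shows "S_inv G sg = \<bar>\<Sum>i<length (bar_positions G). (-1) ^ i * s_edge G sg i\<bar>"
proof -
  have "(\<Sum>i<length (bar_positions G). if even i then s_edge G sg i else 0)
      - (\<Sum>i<length (bar_positions G). if odd i then s_edge G sg i else 0)
      = (\<Sum>i<length (bar_positions G). (-1) ^ i * s_edge G sg i)"
    by (auto simp: sum_subtractf[symmetric] intro!: sum.cong)
  then show ?thesis
    using assms by (simp add: S_inv_def Let_def)
qed

theorem lemma7p6:
  fixes G :: "event list" and sg :: "nat \<Rightarrow> bool"
  assumes "wf_diagram G"
    and "even (length (filter (\<lambda>e. e = Bar) G))"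
  shows "colorable G sg \<longleftrightarrow> S_inv G sg = 0"
proof -
  have even_bars: "even (length (bar_positions G))"
    using assms(2) by (simp add: length_bar_positions)
  have colorable_iff: "colorable G sg \<longleftrightarrow> (\<Sum>p<length G. bar_sign G p * s_contrib sg (G ! p)) = 0"
    using colorable_iff_cyclic_difference_solvable[OF even_bars] cyclic_difference_solvable_iff
    by simp
  show ?thesis
  proof (cases "bar_positions G = []")
    case True
    then have "bar_sign G p = 1" for p
      using bars_before_le[of G "Suc p"] by (simp add: bar_sign_def)
    then have "(\<Sum>p<length G. bar_sign G p * s_contrib sg (G ! p)) = 0"
      using wf_diagram_sum_s_contrib[OF assms(1)] by (simp add: sum_list_sum_nth atLeast0LessThan)
    then show ?thesis
      using True colorable_iff by (simp add: S_inv_def)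
  next
    case False
    then show ?thesis
      using colorable_iff S_inv_eq_abs_alternating_sum alternating_sum_s_edge[OF even_bars] by simp
  qed
qed

end
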